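(* Let $G_1,\dots,G_6$ be the simple graphs on $\{1,\dots,7\}$ whose edges are $12,23,34,45,51,67$ together with, respectively, $G_1$: $61,62,74$; $G_2$: $61,63,72$; $G_3$: $61,63,74$; $G_4$: $61,63,72,74$; $G_5$: $61,72$; $G_6$: $61,73$. Then the Shannon entropy satisfies $H^{*}(G_1)=11/3$ and $H^{*}(G_i)=7/2$ for $i=2,\dots,6$.
   Context: For a simple graph $G=(V,E)$, its Shannon entropy $H^{*}(G)$ is $\sup h(V)$ over all functions $h:2^V\to\mathbb{R}$ satisfying: $h(\{v\})\le1$ for all $v\in V$; $h(S)\le h(T)$ whenever $S\subseteq T\subseteq V$; $h(S\cup T)+h(S\cap T)\le h(S)+h(T)$ for all $S,T\subseteq V$; and $h(N(v)\cup\{v\})=h(N(v))$ for all $v\in V$, where $N(v)$ is the neighbourhood of $v$. *)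

theory Defs
  imports Complex_Main
begin

definition adj :: "'a set set \<Rightarrow> 'a \<Rightarrow> 'a \<Rightarrow> bool" where
  "adj Es u v \<longleftrightarrow> u \<noteq> v \<and> {u, v} \<in> Es"

definition nbhd :: "'a set \<Rightarrow> 'a set set \<Rightarrow> 'a \<Rightarrow> 'a set" where
  "nbhd V Es v = {u \<in> V. adj Es v u}"

definition shannon_feasible :: "'a set \<Rightarrow> 'a set set \<Rightarrow> ('a set \<Rightarrow> real) \<Rightarrow> bool" where
  "shannon_feasible V Es h \<longleftrightarrow>
     h {} = 0 \<and>
     (\<forall>v\<in>V. h {v} \<le> 1) \<and>
     (\<forall>S T. S \<subseteq> T \<and> T \<subseteq> V \<longrightarrow> h S \<le> h T) \<and>
     (\<forall>S T. S \<subseteq> V \<and> T \<subseteq> V \<longrightarrow> h (S \<union> T) + h (S \<inter> T) \<le> h S + h T) \<and>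
     (\<forall>v\<in>V. h (insert v (nbhd V Es v)) = h (nbhd V Es v))"

definition shannon_entropy :: "'a set \<Rightarrow> 'a set set \<Rightarrow> real" where
  "shannon_entropy V Es = Sup ((\<lambda>h. h V) ` {h. shannon_feasible V Es h})"

definition base_edges :: "nat set set" where
  "base_edges = {{1,2},{2,3},{3,4},{4,5},{5,1},{6,7}}"

definition G1 :: "nat set set" where "G1 = base_edges \<union> {{6,1},{6,2},{7,4}}"
definition G2 :: "nat set set" where "G2 = base_edges \<union> {{6,1},{6,3},{7,2}}"
definition G3 :: "nat set set" where "G3 = base_edges \<union> {{6,1},{6,3},{7,4}}"
definition G4 :: "nat set set" where "G4 = base_edges \<union> {{6,1},{6,3},{7,2},{7,4}}"
definition G5 :: "nat set set" where "G5 = base_edges \<union> {{6,1},{7,2}}"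
definition G6 :: "nat set set" where "G6 = base_edges \<union> {{6,1},{7,3}}"

end

theory Submission
  imports Defs
begin

text \<open>Lower bounds: the value is attained by an explicit nonnegative combination of rank functions
  of uniform matroids, which is a polymatroid satisfying the closure constraints. Upper bounds: a
  vertex whose whole neighbourhood lies in a set \<open>S\<close> can be added to \<open>S\<close> without increasing
  \<open>h\<close>; so two sets whose union determines all of \<open>V\<close> give, by submodularity, an inequality
  \<open>h V + h (A \<inter> B) \<le> h A + h B\<close>. Two or three such inequalities, in which the intersection
  terms cancel, bound \<open>h V\<close>.\<close>

definition polymatroid :: "'a set \<Rightarrow> ('a set \<Rightarrow> real) \<Rightarrow> bool" where
  "polymatroid V h \<longleftrightarrow>
     h {} = 0 \<and>
     (\<forall>S T. S \<subseteq> T \<and> T \<subseteq> V \<longrightarrow> h S \<le> h T) \<and>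
     (\<forall>S T. S \<subseteq> V \<and> T \<subseteq> V \<longrightarrow> h (S \<union> T) + h (S \<inter> T) \<le> h S + h T)"

lemma polymatroid_empty: "polymatroid V h \<Longrightarrow> h {} = 0"
  by (simp add: polymatroid_def)

lemma polymatroid_mono: "polymatroid V h \<Longrightarrow> S \<subseteq> T \<Longrightarrow> T \<subseteq> V \<Longrightarrow> h S \<le> h T"
  by (simp add: polymatroid_def)

lemma polymatroid_submodular:
  "polymatroid V h \<Longrightarrow> S \<subseteq> V \<Longrightarrow> T \<subseteq> V \<Longrightarrow> h (S \<union> T) + h (S \<inter> T) \<le> h S + h T"
  by (simp add: polymatroid_def)

lemma polymatroid_add:
  assumes "polymatroid V f" "polymatroid V g"
  shows "polymatroid V (\<lambda>S. f S + g S)"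
proof -
  have "f (S \<union> T) + g (S \<union> T) + (f (S \<inter> T) + g (S \<inter> T)) \<le> f S + g S + (f T + g T)"
    if "S \<subseteq> V" "T \<subseteq> V" for S T
    using polymatroid_submodular[OF assms(1) that] polymatroid_submodular[OF assms(2) that] by linarith
  then show ?thesis
    using assms polymatroid_mono[OF assms(1)] polymatroid_mono[OF assms(2)]
    unfolding polymatroid_def by (auto intro: add_mono)
qed

lemma polymatroid_scale:
  assumes "polymatroid V f" "c \<ge> 0"
  shows "polymatroid V (\<lambda>S. c * f S)"
proof -
  have "c * f (S \<union> T) + c * f (S \<inter> T) \<le> c * f S + c * f T" if "S \<subseteq> V" "T \<subseteq> V" for S T
    using mult_left_mono[OF polymatroid_submodular[OF assms(1) that] assms(2)]
    by (simp add: distrib_left)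
  moreover have "c * f S \<le> c * f T" if "S \<subseteq> T" "T \<subseteq> V" for S T
    using mult_left_mono[OF polymatroid_mono[OF assms(1) that] assms(2)] .
  ultimately show ?thesis
    using polymatroid_empty[OF assms(1)] unfolding polymatroid_def by auto
qed

definition uniform_rank :: "'a set \<Rightarrow> nat \<Rightarrow> 'a set \<Rightarrow> real" where
  "uniform_rank A k S = real (min k (card (S \<inter> A)))"

lemma uniform_rank_submodular:
  assumes "finite A"
  shows "uniform_rank A k (S \<union> T) + uniform_rank A k (S \<inter> T) \<le> uniform_rank A k S + uniform_rank A k T"
proof -
  have "card ((S \<inter> A) \<union> (T \<inter> A)) + card ((S \<inter> A) \<inter> (T \<inter> A)) = card (S \<inter> A) + card (T \<inter> A)"
    using card_Un_Int[of "S \<inter> A" "T \<inter> A"] assms by simp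
  moreover have "card ((S \<inter> A) \<inter> (T \<inter> A)) \<le> card (S \<inter> A)" "card ((S \<inter> A) \<inter> (T \<inter> A)) \<le> card (T \<inter> A)"
    using assms by (auto intro: card_mono)
  ultimately have "min k (card ((S \<inter> A) \<union> (T \<inter> A))) + min k (card ((S \<inter> A) \<inter> (T \<inter> A)))
      \<le> min k (card (S \<inter> A)) + min k (card (T \<inter> A))"
    by linarith
  moreover have "(S \<union> T) \<inter> A = (S \<inter> A) \<union> (T \<inter> A)" "(S \<inter> T) \<inter> A = (S \<inter> A) \<inter> (T \<inter> A)"
    by auto
  ultimately show ?thesis
    unfolding uniform_rank_def by (metis of_nat_add of_nat_le_iff)
qed

lemma uniform_rank_mono: "finite A \<Longrightarrow> S \<subseteq> T \<Longrightarrow> uniform_rank A k S \<le> uniform_rank A k T"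
proof -
  assume "finite A" "S \<subseteq> T"
  then have "card (S \<inter> A) \<le> card (T \<inter> A)" by (intro card_mono) auto
  then show ?thesis unfolding uniform_rank_def by simp
qed

lemma polymatroid_uniform_rank: "finite A \<Longrightarrow> polymatroid V (uniform_rank A k)"
  unfolding polymatroid_def
  by (simp add: uniform_rank_submodular uniform_rank_mono) (simp add: uniform_rank_def)

lemma shannon_feasible_iff:
  "shannon_feasible V Es h \<longleftrightarrow>
     polymatroid V h \<and> (\<forall>v\<in>V. h {v} \<le> 1) \<and>
     (\<forall>v\<in>V. h (insert v (nbhd V Es v)) = h (nbhd V Es v))"
  unfolding shannon_feasible_def polymatroid_def by (simp only: conj_assoc conj_left_commute)

lemma feasible_polymatroid: "shannon_feasible V Es h \<Longrightarrow> polymatroid V h"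
  by (simp add: shannon_feasible_iff)

lemma feasible_singleton_le: "shannon_feasible V Es h \<Longrightarrow> v \<in> V \<Longrightarrow> h {v} \<le> 1"
  by (simp add: shannon_feasible_iff)

lemma feasible_le_card:
  assumes h: "shannon_feasible V Es h" and "S \<subseteq> V" "finite S"
  shows "h S \<le> card S"
  using \<open>finite S\<close> \<open>S \<subseteq> V\<close>
proof (induction S rule: finite_induct)
  case empty
  then show ?case using polymatroid_empty[OF feasible_polymatroid[OF h]] by simp
next
  case (insert x S)
  have "h (insert x S) \<le> h {x} + h S"
    using polymatroid_submodular[OF feasible_polymatroid[OF h], of "{x}" S]
      polymatroid_empty[OF feasible_polymatroid[OF h]] insert.hyps insert.prems
    by simp
  then show ?case
    using insert feasible_singleton_le[OF h, of x] by simp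
qed

text \<open>Submodularity applied to \<open>S\<close> and \<open>N(v) \<union> {v}\<close> transports the closure constraint at \<open>v\<close>
  from \<open>N(v)\<close> to any \<open>S \<supseteq> N(v)\<close>.\<close>

lemma feasible_insert_nbhd:
  assumes h: "shannon_feasible V Es h" and "v \<in> V" "nbhd V Es v \<subseteq> S" "S \<subseteq> V"
  shows "h (insert v S) = h S"
proof -
  have p: "polymatroid V h" using feasible_polymatroid[OF h] .
  have N: "nbhd V Es v \<subseteq> V" by (auto simp: nbhd_def)
  have U: "S \<union> insert v (nbhd V Es v) = insert v S" using assms by auto
  have "h (S \<union> insert v (nbhd V Es v)) + h (S \<inter> insert v (nbhd V Es v))
        \<le> h S + h (insert v (nbhd V Es v))"
    by (rule polymatroid_submodular[OF p]) (use assms N in auto)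
  then have "h (insert v S) + h (S \<inter> insert v (nbhd V Es v)) \<le> h S + h (insert v (nbhd V Es v))"
    unfolding U .
  moreover have "h (nbhd V Es v) \<le> h (S \<inter> insert v (nbhd V Es v))"
    by (rule polymatroid_mono[OF p]) (use assms in auto)
  moreover have "h (insert v (nbhd V Es v)) = h (nbhd V Es v)"
    using h \<open>v \<in> V\<close> by (simp add: shannon_feasible_iff)
  moreover have "h S \<le> h (insert v S)"
    by (rule polymatroid_mono[OF p]) (use assms in auto)
  ultimately show ?thesis by linarith
qed

fun determined_in_order :: "'a set \<Rightarrow> 'a set set \<Rightarrow> 'a set \<Rightarrow> 'a list \<Rightarrow> bool" where
  "determined_in_order V Es S [] \<longleftrightarrow> True"
| "determined_in_order V Es S (v # vs) \<longleftrightarrow>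
     v \<in> V \<and> nbhd V Es v \<subseteq> S \<and> determined_in_order V Es (insert v S) vs"

lemma feasible_determined:
  assumes h: "shannon_feasible V Es h" and "S \<subseteq> V" "determined_in_order V Es S vs"
    and "S \<union> set vs = T"
  shows "h T = h S"
  using assms(2-4)
proof (induction vs arbitrary: S)
  case Nil
  then show ?case by simp
next
  case (Cons v vs)
  have "h T = h (insert v S)"
    using Cons.IH[of "insert v S"] Cons.prems by auto
  also have "\<dots> = h S"
    using feasible_insert_nbhd[OF h] Cons.prems by simp
  finally show ?case .
qed

lemma feasible_submodular_determined:
  assumes h: "shannon_feasible V Es h" and "A \<subseteq> V" "B \<subseteq> V" "A \<union> B = C"
    and "determined_in_order V Es C vs" "C \<union> set vs = T" "A \<inter> B = I"
  shows "h T + h I \<le> h A + h B"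
  using polymatroid_submodular[OF feasible_polymatroid[OF h] assms(2,3)]
    feasible_determined[OF h _ assms(5,6)] assms(2-4,7)
  by auto

lemma shannon_entropy_eqI:
  assumes "shannon_feasible V Es h\<^sub>0" "h\<^sub>0 V = b"
    and "\<And>h. shannon_feasible V Es h \<Longrightarrow> h V \<le> b"
  shows "shannon_entropy V Es = b"
  unfolding shannon_entropy_def
proof (rule cSup_eq_maximum)
  show "b \<in> (\<lambda>h. h V) ` {h. shannon_feasible V Es h}"
    using assms(1,2) by force
qed (use assms(3) in blast)

lemma vertices_eq: "{1..7::nat} = {1,2,3,4,5,6,7}"
  by auto

text \<open>Keep the simplifier from rewriting \<open>1::nat\<close> to \<open>Suc 0\<close>, so that the neighbourhood
  equations below remain applicable.\<close>

declare One_nat_def [simp del]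

lemma nbhd_G1:
  "nbhd {1..7} G1 1 = {2,5,6}" "nbhd {1..7} G1 2 = {1,3,6}" "nbhd {1..7} G1 3 = {2,4}"
  "nbhd {1..7} G1 4 = {3,5,7}" "nbhd {1..7} G1 5 = {1,4}" "nbhd {1..7} G1 6 = {1,2,7}"
  "nbhd {1..7} G1 7 = {4,6}"
  unfolding nbhd_def adj_def G1_def base_edges_def by (auto simp: doubleton_eq_iff)

lemma nbhd_G2:
  "nbhd {1..7} G2 1 = {2,5,6}" "nbhd {1..7} G2 2 = {1,3,7}" "nbhd {1..7} G2 3 = {2,4,6}"
  "nbhd {1..7} G2 4 = {3,5}" "nbhd {1..7} G2 5 = {1,4}" "nbhd {1..7} G2 6 = {1,3,7}"
  "nbhd {1..7} G2 7 = {2,6}"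
  unfolding nbhd_def adj_def G2_def base_edges_def by (auto simp: doubleton_eq_iff)

lemma nbhd_G3:
  "nbhd {1..7} G3 1 = {2,5,6}" "nbhd {1..7} G3 2 = {1,3}" "nbhd {1..7} G3 3 = {2,4,6}"
  "nbhd {1..7} G3 4 = {3,5,7}" "nbhd {1..7} G3 5 = {1,4}" "nbhd {1..7} G3 6 = {1,3,7}"
  "nbhd {1..7} G3 7 = {4,6}"
  unfolding nbhd_def adj_def G3_def base_edges_def by (auto simp: doubleton_eq_iff)

lemma nbhd_G4:
  "nbhd {1..7} G4 1 = {2,5,6}" "nbhd {1..7} G4 2 = {1,3,7}" "nbhd {1..7} G4 3 = {2,4,6}"
  "nbhd {1..7} G4 4 = {3,5,7}" "nbhd {1..7} G4 5 = {1,4}" "nbhd {1..7} G4 6 = {1,3,7}"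
  "nbhd {1..7} G4 7 = {2,4,6}"
  unfolding nbhd_def adj_def G4_def base_edges_def by (auto simp: doubleton_eq_iff)

lemma nbhd_G5:
  "nbhd {1..7} G5 1 = {2,5,6}" "nbhd {1..7} G5 2 = {1,3,7}" "nbhd {1..7} G5 3 = {2,4}"
  "nbhd {1..7} G5 4 = {3,5}" "nbhd {1..7} G5 5 = {1,4}" "nbhd {1..7} G5 6 = {1,7}"
  "nbhd {1..7} G5 7 = {2,6}"
  unfolding nbhd_def adj_def G5_def base_edges_def by (auto simp: doubleton_eq_iff)

lemma nbhd_G6:
  "nbhd {1..7} G6 1 = {2,5,6}" "nbhd {1..7} G6 2 = {1,3}" "nbhd {1..7} G6 3 = {2,4,7}"
  "nbhd {1..7} G6 4 = {3,5}" "nbhd {1..7} G6 5 = {1,4}" "nbhd {1..7} G6 6 = {1,7}"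
  "nbhd {1..7} G6 7 = {3,6}"
  unfolding nbhd_def adj_def G6_def base_edges_def by (auto simp: doubleton_eq_iff)

lemma G1_feasible_le:
  assumes h: "shannon_feasible {1..7::nat} G1 h"
  shows "h {1..7} \<le> 11/3"
proof -
  note submod = feasible_submodular_determined[OF h] and det = feasible_determined[OF h]
    and card = feasible_le_card[OF h]
  have "h {1..7} + h {1,5} \<le> h {1,4,5} + h {1,2,5,6}"
    by (rule submod[where vs = "[3,7]"]) (auto simp: nbhd_G1)
  moreover have "h {1..7} + h {2,3} \<le> h {2,3,4} + h {1,2,3,6}"
    by (rule submod[where vs = "[5,7]"]) (auto simp: nbhd_G1)
  moreover have "h {1..7} + h {} \<le> h {7} + h {1,2,3,5}"
    by (rule submod[where vs = "[6,4]"]) (auto simp: nbhd_G1)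
  moreover have "h {1,2,3,5} + h {} \<le> h {1,5} + h {2,3}"
    by (rule submod[where vs = "[]"]) auto
  moreover have "h {1,4,5} = h {1,4}"
    by (rule det[where vs = "[5]"]) (auto simp: nbhd_G1)
  moreover have "h {1,2,5,6} = h {2,5,6}"
    by (rule det[where vs = "[1]"]) (auto simp: nbhd_G1)
  moreover have "h {2,3,4} = h {2,4}"
    by (rule det[where vs = "[3]"]) (auto simp: nbhd_G1)
  moreover have "h {1,2,3,6} = h {1,3,6}"
    by (rule det[where vs = "[2]"]) (auto simp: nbhd_G1)
  moreover have "h {7} \<le> 1" "h {1,4} \<le> 2" "h {2,5,6} \<le> 3" "h {2,4} \<le> 2" "h {1,3,6} \<le> 3"
    by (rule order_trans[OF card], auto)+
  ultimately show ?thesis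
    using polymatroid_empty[OF feasible_polymatroid[OF h]] by linarith
qed

lemma seven_halves_bound_13457_2456:
  assumes h: "shannon_feasible {1..7::nat} Es h"
    and d1: "determined_in_order {1..7} Es {1,3,4,5,7} [6,2]"
    and d2: "determined_in_order {1..7} Es {2,4,5,6} [1,3,7]"
    and d3: "determined_in_order {1..7} Es {1,4} [5]"
    and d4: "determined_in_order {1..7} Es {3,5} [4]"
  shows "h {1..7} \<le> 7/2"
proof -
  note submod = feasible_submodular_determined[OF h] and det = feasible_determined[OF h]
    and card = feasible_le_card[OF h]
  have "h {1..7} + h {} \<le> h {7} + h {1,3,4,5}"
    by (rule submod[OF _ _ _ d1]) auto
  moreover have "h {1..7} + h {} \<le> h {2} + h {4,5,6}"
    by (rule submod[OF _ _ _ d2]) auto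
  moreover have "h {1,3,4,5} + h {4,5} \<le> h {1,4,5} + h {3,4,5}"
    by (rule submod[where vs = "[]"]) auto
  moreover have "h {4,5,6} + h {} \<le> h {6} + h {4,5}"
    by (rule submod[where vs = "[]"]) auto
  moreover have "h {1,4,5} = h {1,4}" "h {3,4,5} = h {3,5}"
    by (rule det[OF _ d3], auto) (rule det[OF _ d4], auto)
  moreover have "h {2} \<le> 1" "h {6} \<le> 1" "h {7} \<le> 1" "h {1,4} \<le> 2" "h {3,5} \<le> 2"
    by (rule order_trans[OF card], auto)+
  ultimately show ?thesis
    using polymatroid_empty[OF feasible_polymatroid[OF h]] by linarith
qed

lemma seven_halves_bound_12456_1357:
  assumes h: "shannon_feasible {1..7::nat} Es h"
    and d1: "determined_in_order {1..7} Es {1,2,4,5,6} [3,7]"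
    and d2: "determined_in_order {1..7} Es {1,3,5,7} [6,2,4]"
    and d3: "determined_in_order {1..7} Es {1,4} [5]"
    and d4: "determined_in_order {1..7} Es {2,5,6} [1]"
  shows "h {1..7} \<le> 7/2"
proof -
  note submod = feasible_submodular_determined[OF h] and det = feasible_determined[OF h]
    and card = feasible_le_card[OF h]
  have "h {1..7} + h {1,5} \<le> h {1,4,5} + h {1,2,5,6}"
    by (rule submod[OF _ _ _ d1]) auto
  moreover have "h {1..7} + h {} \<le> h {3} + h {1,5,7}"
    by (rule submod[OF _ _ _ d2]) auto
  moreover have "h {1,5,7} + h {} \<le> h {7} + h {1,5}"
    by (rule submod[where vs = "[]"]) auto
  moreover have "h {1,4,5} = h {1,4}" "h {1,2,5,6} = h {2,5,6}"
    by (rule det[OF _ d3], auto) (rule det[OF _ d4], auto)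
  moreover have "h {3} \<le> 1" "h {7} \<le> 1" "h {1,4} \<le> 2" "h {2,5,6} \<le> 3"
    by (rule order_trans[OF card], auto)+
  ultimately show ?thesis
    using polymatroid_empty[OF feasible_polymatroid[OF h]] by linarith
qed

lemma G2_feasible_le: "shannon_feasible {1..7::nat} G2 h \<Longrightarrow> h {1..7} \<le> 7/2"
  by (rule seven_halves_bound_13457_2456) (auto simp: nbhd_G2)

lemma G3_feasible_le: "shannon_feasible {1..7::nat} G3 h \<Longrightarrow> h {1..7} \<le> 7/2"
  by (rule seven_halves_bound_12456_1357) (auto simp: nbhd_G3)

lemma G4_feasible_le: "shannon_feasible {1..7::nat} G4 h \<Longrightarrow> h {1..7} \<le> 7/2"
  by (rule seven_halves_bound_12456_1357) (auto simp: nbhd_G4)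

lemma G5_feasible_le: "shannon_feasible {1..7::nat} G5 h \<Longrightarrow> h {1..7} \<le> 7/2"
  by (rule seven_halves_bound_13457_2456) (auto simp: nbhd_G5)

lemma G6_feasible_le:
  assumes h: "shannon_feasible {1..7::nat} G6 h"
  shows "h {1..7} \<le> 7/2"
proof -
  note submod = feasible_submodular_determined[OF h] and det = feasible_determined[OF h]
    and card = feasible_le_card[OF h]
  have "h {1..7} + h {1,2} \<le> h {1,2,3} + h {1,2,5,6}"
    by (rule submod[where vs = "[4,7]"]) (auto simp: nbhd_G6)
  moreover have "h {1..7} + h {} \<le> h {4} + h {1,2,6,7}"
    by (rule submod[where vs = "[3,5]"]) (auto simp: nbhd_G6)
  moreover have "h {1,2,7} + h {} \<le> h {7} + h {1,2}"
    by (rule submod[where vs = "[]"]) auto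
  moreover have "h {1,2,6,7} = h {1,2,7}"
    by (rule det[where vs = "[6]"]) (auto simp: nbhd_G6)
  moreover have "h {1,2,3} = h {1,3}"
    by (rule det[where vs = "[2]"]) (auto simp: nbhd_G6)
  moreover have "h {1,2,5,6} = h {2,5,6}"
    by (rule det[where vs = "[1]"]) (auto simp: nbhd_G6)
  moreover have "h {4} \<le> 1" "h {7} \<le> 1" "h {1,3} \<le> 2" "h {2,5,6} \<le> 3"
    by (rule order_trans[OF card], auto)+
  ultimately show ?thesis
    using polymatroid_empty[OF feasible_polymatroid[OF h]] by linarith
qed

lemma ball_vertices: "(\<forall>v\<in>{1..7::nat}. P v) \<longleftrightarrow> P 1 \<and> P 2 \<and> P 3 \<and> P 4 \<and> P 5 \<and> P 6 \<and> P 7"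
  unfolding vertices_eq by simp

definition seven_halves_witness :: "nat set \<Rightarrow> real" where
  "seven_halves_witness S =
     1/2 * (uniform_rank {1,2} 1 S + uniform_rank {2,3} 1 S + uniform_rank {3,4} 1 S
            + uniform_rank {4,5} 1 S + uniform_rank {5,1} 1 S)
     + uniform_rank {6,7} 1 S"

definition eleven_thirds_witness :: "nat set \<Rightarrow> real" where
  "eleven_thirds_witness S =
     1/3 * (2 * uniform_rank {1,5} 1 S + 2 * uniform_rank {2,3} 1 S + uniform_rank {3,4} 1 S
            + uniform_rank {4,5} 1 S + 2 * uniform_rank {6,7} 1 S + uniform_rank {1,2,6} 2 S
            + uniform_rank {4,7} 1 S)"

lemma polymatroid_seven_halves_witness: "polymatroid V seven_halves_witness"
  unfolding seven_halves_witness_def [abs_def]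
  by (intro polymatroid_add polymatroid_scale polymatroid_uniform_rank) auto

lemma polymatroid_eleven_thirds_witness: "polymatroid V eleven_thirds_witness"
  unfolding eleven_thirds_witness_def [abs_def]
  by (intro polymatroid_add polymatroid_scale polymatroid_uniform_rank) auto

lemma seven_halves_witness_feasible:
  "shannon_feasible {1..7} G2 seven_halves_witness"
  "shannon_feasible {1..7} G3 seven_halves_witness"
  "shannon_feasible {1..7} G4 seven_halves_witness"
  "shannon_feasible {1..7} G5 seven_halves_witness"
  "shannon_feasible {1..7} G6 seven_halves_witness"
  by (simp_all add: shannon_feasible_iff polymatroid_seven_halves_witness ball_vertices
      nbhd_G2 nbhd_G3 nbhd_G4 nbhd_G5 nbhd_G6 seven_halves_witness_def uniform_rank_def)

lemma eleven_thirds_witness_feasible: "shannon_feasible {1..7} G1 eleven_thirds_witness"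
  by (simp add: shannon_feasible_iff polymatroid_eleven_thirds_witness ball_vertices nbhd_G1
      eleven_thirds_witness_def uniform_rank_def)

lemma seven_halves_witness_vertices: "seven_halves_witness {1..7} = 7/2"
  by (simp add: vertices_eq seven_halves_witness_def uniform_rank_def)

lemma eleven_thirds_witness_vertices: "eleven_thirds_witness {1..7} = 11/3"
  by (simp add: vertices_eq eleven_thirds_witness_def uniform_rank_def)

theorem mainTheorem6:
  shows "shannon_entropy {1..7::nat} G1 = 11/3
       \<and> shannon_entropy {1..7::nat} G2 = 7/2
       \<and> shannon_entropy {1..7::nat} G3 = 7/2
       \<and> shannon_entropy {1..7::nat} G4 = 7/2
       \<and> shannon_entropy {1..7::nat} G5 = 7/2
       \<and> shannon_entropy {1..7::nat} G6 = 7/2"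
proof (intro conjI)
  note eqI = shannon_entropy_eqI
  show "shannon_entropy {1..7::nat} G1 = 11/3"
    by (rule eqI[OF eleven_thirds_witness_feasible eleven_thirds_witness_vertices]) (rule G1_feasible_le)
  show "shannon_entropy {1..7::nat} G2 = 7/2"
    by (rule eqI[OF seven_halves_witness_feasible(1) seven_halves_witness_vertices]) (rule G2_feasible_le)
  show "shannon_entropy {1..7::nat} G3 = 7/2"
    by (rule eqI[OF seven_halves_witness_feasible(2) seven_halves_witness_vertices]) (rule G3_feasible_le)
  show "shannon_entropy {1..7::nat} G4 = 7/2"
    by (rule eqI[OF seven_halves_witness_feasible(3) seven_halves_witness_vertices]) (rule G4_feasible_le)
  show "shannon_entropy {1..7::nat} G5 = 7/2"
    by (rule eqI[OF seven_halves_witness_feasible(4) seven_halves_witness_vertices]) (rule G5_feasible_le)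
  show "shannon_entropy {1..7::nat} G6 = 7/2"
    by (rule eqI[OF seven_halves_witness_feasible(5) seven_halves_witness_vertices]) (rule G6_feasible_le)
qed

end
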